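(* Let $M,N\ge3$ be integers with $M$ divisible by $(7^{N+1})!$. For $1\le i\le N$ let $\theta_i=\frac1{7^i}$, let $\mu=\frac1{7^N}$ and $\Theta_k=\sum_{i=k}^N\theta_i$. For $1\le k\le N$ let $I_k$ be the sequence consisting of $N-k+1$ batches of $M$ identical items each, where the batches have item sizes $\theta_N,\theta_{N-1},\dots,\theta_k$ in this order. Then $\mathrm{OPT}(I_k)=\frac{M\,\Theta_k}{1-\mu+\theta_k}$ for every $1\le k\le N$.
   Context: Ordered Open End Bin Packing: a sequence of items with sizes in $(0,1]$ must be packed into bins in sequence order, where an item may be added to a bin only if the bin's current total size is strictly below $1$; equivalently, in each bin the total size of all items except the one appearing last in the sequence is strictly below $1$. $\mathrm{OPT}(I)$ is the minimum number of bins of such a packing of the sequence $I$. *)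

theory Defs
  imports Complex_Main
begin

text \<open>An item sequence is a list of reals (sizes in (0,1]).
  A packing assigns to each item index i < length xs a bin label f i.
  Items are packed in sequence order; item j may be added to its bin only if the
  current total size of that bin (items i < j already in it) is strictly below 1.\<close>

definition valid_oe_packing :: "real list \<Rightarrow> (nat \<Rightarrow> nat) \<Rightarrow> nat \<Rightarrow> bool" where
  "valid_oe_packing xs f m \<longleftrightarrow>
     (\<forall>i < length xs. f i < m) \<and>
     (\<forall>j < length xs. (\<Sum>i \<in> {i. i < j \<and> f i = f j}. xs ! i) < 1)"

definition OPT :: "real list \<Rightarrow> nat" where
  "OPT xs = (LEAST m. \<exists>f. valid_oe_packing xs f m)"

end

theory Submission
  imports Defs
begin

text \<open>Measure sizes in units of \<open>1/7^N\<close>, so an item of size \<open>\<theta>\<^sub>i\<close> has integer weight \<open>7^(N-i)\<close>.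
  In an open end bin every item but the last has total weight at most \<open>7^N - 1\<close>, and the last
  one weighs at most \<open>7^(N-k)\<close>; comparing with the total weight gives the lower bound.
  For the matching packing, the first items of each batch are put six per bin, the last items
  of the final batch close the bins, and all other items are laid side by side on a line that is
  cut into one segment per bin. All offsets on that line are multiples of the weight of the item
  placed there, hence no item straddles two segments.\<close>

lemma valid_oe_packing_scaled:
  fixes w :: "nat \<Rightarrow> nat"
  assumes "0 < K" and sizes: "\<And>i. i < length xs \<Longrightarrow> xs ! i = real (w i) / real K"
  shows "valid_oe_packing xs f m \<longleftrightarrow>
    (\<forall>i<length xs. f i < m) \<and> (\<forall>j<length xs. (\<Sum>i\<in>{i. i < j \<and> f i = f j}. w i) < K)"
proof -
  have "(\<Sum>i\<in>{i. i < j \<and> f i = f j}. xs ! i) < 1 \<longleftrightarrow> (\<Sum>i\<in>{i. i < j \<and> f i = f j}. w i) < K"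
    if "j < length xs" for j
  proof -
    have "(\<Sum>i\<in>{i. i < j \<and> f i = f j}. xs ! i) = real (\<Sum>i\<in>{i. i < j \<and> f i = f j}. w i) / real K"
      unfolding of_nat_sum sum_divide_distrib using that by (intro sum.cong) (auto simp: sizes)
    then show ?thesis using \<open>0 < K\<close> by (simp add: divide_less_eq del: of_nat_sum)
  qed
  then show ?thesis unfolding valid_oe_packing_def by auto
qed

lemma oe_bin_weight_le:
  fixes w :: "nat \<Rightarrow> nat"
  assumes load: "\<forall>j<l. (\<Sum>i\<in>{i. i < j \<and> f i = f j}. w i) < K"
    and bounded: "\<forall>i<l. w i \<le> W"
  shows "(\<Sum>p\<in>{p. p < l \<and> f p = b}. w p) \<le> K - 1 + W"
proof (cases "{p. p < l \<and> f p = b} = {}")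
  case True
  then show ?thesis by (simp only: True) simp
next
  case False
  define P where "P = {p. p < l \<and> f p = b}"
  have "finite P" unfolding P_def by simp
  define j where "j = Max P"
  have j: "j \<in> P" unfolding j_def P_def using False \<open>finite P\<close> Max_in P_def by blast
  have "j < l" "f j = b" using j by (simp_all add: P_def)
  have "P - {j} = {i. i < j \<and> f i = f j}"
    using j Max_ge[OF \<open>finite P\<close>] unfolding j_def by (auto simp: P_def order.order_iff_strict)
  moreover have "(\<Sum>i\<in>{i. i < j \<and> f i = f j}. w i) < K" using load \<open>j < l\<close> by blast
  ultimately have "(\<Sum>p\<in>P - {j}. w p) < K" by simp
  moreover have "w j \<le> W" using bounded \<open>j < l\<close> by blast
  moreover have "(\<Sum>p\<in>P. w p) = w j + (\<Sum>p\<in>P - {j}. w p)"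
    using j \<open>finite P\<close> by (simp add: sum.remove)
  ultimately show ?thesis unfolding P_def by linarith
qed

lemma oe_total_weight_le:
  fixes w :: "nat \<Rightarrow> nat"
  assumes bins: "\<forall>i<l. f i < m"
    and load: "\<forall>j<l. (\<Sum>i\<in>{i. i < j \<and> f i = f j}. w i) < K"
    and bounded: "\<forall>i<l. w i \<le> W"
  shows "(\<Sum>p<l. w p) \<le> m * (K - 1 + W)"
proof -
  have "f ` {..<l} \<subseteq> {..<m}" using bins by auto
  then have "(\<Sum>p<l. w p) = (\<Sum>b<m. \<Sum>p\<in>{p. p < l \<and> f p = b}. w p)"
    using sum.group[of "{..<l}" "{..<m}" f w] by simp
  also have "\<dots> \<le> (\<Sum>b<m. K - 1 + W)"
    by (intro sum_mono oe_bin_weight_le[OF load bounded])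
  finally show ?thesis by simp
qed

lemma OPT_eqI:
  assumes "valid_oe_packing xs f m" and "\<And>g m'. valid_oe_packing xs g m' \<Longrightarrow> m \<le> m'"
  shows "OPT xs = m"
  unfolding OPT_def by (rule Least_equality) (use assms in blast)+

lemma six_times_sum_powers_seven: "6 * (\<Sum>c<m. 7 ^ c) = 7 ^ m - (1::nat)"
proof (induction m)
  case (Suc m)
  have "(1::nat) \<le> 7 ^ m" by simp
  then show ?case using Suc by (simp add: algebra_simps)
qed simp

lemma sum_div_blocks:
  fixes g :: "nat \<Rightarrow> 'a::comm_semiring_1"
  shows "(\<Sum>p<m * M. g (p div M)) = of_nat M * (\<Sum>c<m. g c)"
proof -
  have "(\<Sum>p\<in>{c * M..<c * M + M}. g (p div M)) = of_nat M * g c" for c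
  proof (cases "M = 0")
    case False
    have "(\<Sum>p\<in>{c * M..<c * M + M}. g (p div M)) = (\<Sum>p\<in>{c * M..<c * M + M}. g c)"
      using False by (intro sum.cong) (auto simp: div_nat_eqI mult.commute)
    then show ?thesis by simp
  qed simp
  then show ?thesis
    by (simp flip: sum.nat_group add: sum_distrib_left)
qed

lemma aligned_end_le:
  fixes x d L :: nat
  assumes "0 < d" "0 < L" "d dvd x" "d dvd L"
  shows "x + d \<le> (x div L + 1) * L"
proof -
  have less: "x < (x div L + 1) * L"
    using dividend_less_div_times[OF \<open>0 < L\<close>] by simp
  moreover have "d dvd (x div L + 1) * L" using \<open>d dvd L\<close> by simp
  ultimately have "d dvd (x div L + 1) * L - x" using \<open>d dvd x\<close> by (simp add: dvd_diff_nat)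
  then have "d \<le> (x div L + 1) * L - x" using less by (simp add: dvd_imp_le)
  then show ?thesis using less by simp
qed

lemma concat_map_replicate_upt:
  "concat (map (\<lambda>c. replicate M (g c)) [0..<m]) = map (\<lambda>p. g (p div M)) [0..<m * M]"
proof (induction m)
  case (Suc m)
  have block: "map (\<lambda>p. g (p div M)) [m * M..<m * M + M] = replicate M (g m)"
  proof (rule nth_equalityI)
    fix i assume "i < length (map (\<lambda>p. g (p div M)) [m * M..<m * M + M])"
    then have "(m * M + i) div M = m"
      by (intro div_nat_eqI) (simp_all add: mult.commute)
    then show "map (\<lambda>p. g (p div M)) [m * M..<m * M + M] ! i = replicate M (g m) ! i"
      using \<open>i < length _\<close> by simp
  qed simp
  have "[0..<Suc m * M] = [0..<m * M] @ [m * M..<m * M + M]"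
    using upt_add_eq_append[of 0 "m * M" M] by (simp add: add.commute)
  then show ?case
    using Suc.IH block by simp
qed simp

lemma rev_upt_Suc:
  assumes "k \<le> Suc N"
  shows "rev [k..<Suc N] = map (\<lambda>c. N - c) [0..<Suc N - k]"
  using assms by (intro nth_equalityI) (auto simp del: upt_Suc simp: rev_nth)

lemma sum_inverse_powers_seven:
  "(\<Sum>i = k..k + s. 1 / (7::real) ^ i) = (7 ^ Suc s - 1) / (6 * 7 ^ (k + s))"
proof (induction s)
  case (Suc s)
  have "(\<Sum>i = k..k + Suc s. 1 / (7::real) ^ i) = (7 ^ Suc s - 1) / (6 * 7 ^ (k + s)) + 1 / 7 ^ (k + Suc s)"
    using Suc by (simp add: add_Suc_right)
  also have "\<dots> = (7 ^ Suc (Suc s) - 1) / (6 * 7 ^ (k + Suc s))"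
    by (simp add: field_simps power_add)
  finally show ?case .
qed (simp add: field_simps)

locale geometric_batches =
  fixes s t n :: nat
  assumes six_le_n: "6 \<le> n"
begin

text \<open>There will be \<open>B\<close> bins; each batch below the top one puts \<open>6 * B\<close> items directly into the bins
  and \<open>6 * G\<close> items onto the line, whose segment for one bin has length \<open>L\<close>.\<close>

definition a :: nat where "a = 7 ^ s"
definition M :: nat where "M = 6 * t * (a * n - 1 + a)"
definition B :: nat where "B = t * (7 * a - 1)"
definition G :: nat where "G = t * a * (n - 6)"
definition L :: nat where "L = a * (n - 1)"

definition w :: "nat \<Rightarrow> nat" where "w p = 7 ^ (p div M)"

definition items :: "real list" where
  "items = map (\<lambda>p. real (w p) / real (a * n)) [0..<Suc s * M]"

lemma length_items [simp]: "length items = Suc s * M"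
  by (simp add: items_def)

lemma a_pos: "0 < a"
  by (simp add: a_def)

lemma L_pos: "0 < L"
  using six_le_n by (simp add: L_def a_def)

lemma L_plus_a: "L + a = a * n"
  unfolding L_def using six_le_n by (cases n) simp_all

lemma int_M: "int M = 6 * int t * (int a * int n - 1 + int a)"
  using a_pos six_le_n by (simp add: M_def of_nat_diff)

lemma int_B: "int B = int t * (7 * int a - 1)"
  using a_pos by (simp add: B_def of_nat_diff)

lemma int_G: "int G = int t * int a * (int n - 6)"
  using six_le_n by (simp add: G_def of_nat_diff)

lemma int_L: "int L = int a * (int n - 1)"
  using six_le_n by (simp add: L_def of_nat_diff)

lemma M_eq: "M = 6 * B + 6 * G"
proof -
  have "int M = 6 * int B + 6 * int G"
    unfolding int_M int_B int_G by algebra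
  then show ?thesis by linarith
qed

lemma line_length: "G * (a - 1) + (M - B) * a = B * L"
proof -
  have "int (G * (a - 1) + (M - B) * a) = int G * (int a - 1) + (int M - int B) * int a"
    using a_pos M_eq by (simp add: of_nat_diff)
  also have "\<dots> = int (B * L)"
    unfolding of_nat_mult int_M int_B int_G int_L by algebra
  finally show ?thesis by (simp only: of_nat_eq_iff)
qed

lemma batch_le: "p < Suc s * M \<Longrightarrow> p div M \<le> s"
  using less_mult_imp_div_less[of p "Suc s" M] by simp

lemma w_le_a: "p < Suc s * M \<Longrightarrow> w p \<le> a"
  unfolding w_def a_def by (intro power_increasing batch_le) auto

lemma total_weight: "(\<Sum>p<Suc s * M. w p) = B * (a * n - 1 + a)"
proof -
  have "6 * (\<Sum>p<Suc s * M. w p) = M * (6 * (\<Sum>c<Suc s. 7 ^ c))"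
    unfolding w_def sum_div_blocks by simp
  also have "\<dots> = M * (7 * a - 1)"
    by (simp only: six_times_sum_powers_seven) (simp add: a_def)
  also have "\<dots> = 6 * (B * (a * n - 1 + a))"
    by (simp add: M_def B_def)
  finally show ?thesis by simp
qed

lemma items_scaled: "i < length items \<Longrightarrow> items ! i = real (w i) / real (a * n)"
  unfolding length_items by (simp add: items_def)

lemma bins_ge_B:
  assumes "valid_oe_packing items f m"
  shows "B \<le> m"
proof -
  have "0 < a * n" using a_pos six_le_n by simp
  with assms have bins: "\<forall>i<Suc s * M. f i < m"
    and load: "\<forall>j<Suc s * M. (\<Sum>i\<in>{i. i < j \<and> f i = f j}. w i) < a * n"
    using valid_oe_packing_scaled[OF _ items_scaled] by simp_all
  have "\<forall>i<Suc s * M. w i \<le> a" using w_le_a by blast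
  then have "(\<Sum>p<Suc s * M. w p) \<le> m * (a * n - 1 + a)"
    by (rule oe_total_weight_le[OF bins load])
  then have "B * (a * n - 1 + a) \<le> m * (a * n - 1 + a)"
    by (simp only: total_weight)
  then show ?thesis using a_pos by simp
qed

definition head :: "nat \<Rightarrow> bool" where
  "head p \<longleftrightarrow> p div M < s \<and> p mod M < 6 * B"

definition closing :: "nat \<Rightarrow> bool" where
  "closing p \<longleftrightarrow> s \<le> p div M \<and> M - B \<le> p mod M"

definition filler :: "nat \<Rightarrow> bool" where
  "filler p \<longleftrightarrow> \<not> head p \<and> \<not> closing p"

text \<open>The fillers of batch \<open>c < s\<close> occupy \<open>[G * (7 ^ c - 1), G * (7 ^ Suc c - 1))\<close> on the line,
  those of the top batch occupy \<open>[G * (a - 1), B * L)\<close>; \<open>slot p\<close> is the position of filler \<open>p\<close>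
  among the fillers of its batch.\<close>

definition slot :: "nat \<Rightarrow> nat" where
  "slot p = (if p div M < s then p mod M - 6 * B else p mod M)"

definition offset :: "nat \<Rightarrow> nat" where
  "offset p = G * (7 ^ (p div M) - 1) + slot p * 7 ^ (p div M)"

definition pack :: "nat \<Rightarrow> nat" where
  "pack p = (if head p then p mod M div 6
             else if closing p then p mod M - (M - B)
             else offset p div L)"

lemma offset_add_w: "offset p + w p = G * (7 ^ (p div M) - 1) + Suc (slot p) * 7 ^ (p div M)"
  by (simp add: offset_def w_def)

lemma filler_cases:
  assumes "p < Suc s * M" "filler p"
  obtains "p div M < s" "6 * B \<le> p mod M" | "p div M = s" "p mod M < M - B"
  using assms batch_le[of p] by (force simp: filler_def head_def closing_def)

lemma filler_end_le:
  assumes "p < Suc s * M" "filler p"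
  shows "offset p + w p \<le> (if p div M < s then G * (7 ^ Suc (p div M) - 1) else B * L)"
  using assms
proof (cases rule: filler_cases)
  case 1
  let ?c = "p div M"
  have "p mod M < M" using assms by (cases "M = 0") auto
  moreover have "slot p + 6 * B = p mod M" using 1 by (simp add: slot_def)
  ultimately have "Suc (slot p) \<le> 6 * G" using M_eq by linarith
  then have "Suc (slot p) * 7 ^ ?c \<le> 6 * G * 7 ^ ?c"
    by (rule mult_right_mono) simp
  moreover have "G * (7 ^ Suc ?c - 1) = G * (7 ^ ?c - 1) + 6 * G * 7 ^ ?c"
    using one_le_power[of 7 ?c] by (simp add: algebra_simps)
  ultimately have "offset p + w p \<le> G * (7 ^ Suc ?c - 1)"
    using offset_add_w[of p] by linarith
  then show ?thesis using 1 by simp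
next
  case 2
  then have "Suc (slot p) * a \<le> (M - B) * a"
    by (intro mult_right_mono) (auto simp: slot_def)
  then have "offset p + w p \<le> B * L"
    using 2 offset_add_w[of p] line_length by (simp add: a_def)
  then show ?thesis using 2 by simp
qed

lemma filler_end_le_line:
  assumes "p < Suc s * M" "filler p"
  shows "offset p + w p \<le> B * L"
proof (cases "p div M < s")
  case True
  then have "G * (7 ^ Suc (p div M) - 1) \<le> G * (a - 1)"
    unfolding a_def by (intro mult_left_mono diff_le_mono power_increasing) auto
  also have "\<dots> \<le> B * L"
    using line_length by linarith
  finally show ?thesis
    using filler_end_le[OF assms] True by simp
qed (use filler_end_le[OF assms] in simp)

lemma filler_offsets_mono:
  assumes "p < q" "q < Suc s * M" "filler p" "filler q"
  shows "offset p + w p \<le> offset q"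
proof (cases "p div M = q div M")
  case True
  have "p mod M < q mod M"
    using True \<open>p < q\<close> by (metis add_less_cancel_left div_mult_mod_eq)
  moreover have "6 * B \<le> p mod M" if "p div M < s"
    using that \<open>filler p\<close> by (simp add: filler_def head_def)
  ultimately have "Suc (slot p) * 7 ^ (q div M) \<le> slot q * 7 ^ (q div M)"
    using True by (intro mult_right_mono) (auto simp: slot_def)
  then show ?thesis
    using True offset_add_w[of p] by (simp add: offset_def)
next
  case False
  then have less: "p div M < q div M"
    using \<open>p < q\<close> by (simp add: div_le_mono order.not_eq_order_implies_strict)
  then have "p div M < s"
    using batch_le[OF \<open>q < Suc s * M\<close>] by simp
  then have "offset p + w p \<le> G * (7 ^ Suc (p div M) - 1)"
    using filler_end_le[of p] assms by simp
  also have "\<dots> \<le> G * (7 ^ (q div M) - 1)"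
    using less by (intro mult_left_mono diff_le_mono power_increasing) auto
  also have "\<dots> \<le> offset q"
    by (simp add: offset_def)
  finally show ?thesis .
qed

lemma weight_dvd:
  assumes "p < Suc s * M"
  shows "w p dvd offset p" and "w p dvd L"
proof -
  have "w p dvd a"
    unfolding w_def a_def using batch_le[OF assms] by (simp add: le_imp_power_dvd)
  moreover have "a dvd G" "a dvd L"
    by (simp_all add: G_def L_def)
  ultimately show "w p dvd offset p" "w p dvd L"
    by (auto simp: offset_def w_def intro: dvd_trans)
qed

lemma filler_in_segment:
  assumes "p < Suc s * M" "filler p"
  shows "pack p * L \<le> offset p" and "offset p + w p \<le> (pack p + 1) * L"
proof -
  have "pack p = offset p div L"
    using assms by (simp add: pack_def filler_def)
  then show "pack p * L \<le> offset p" "offset p + w p \<le> (pack p + 1) * L"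
    using aligned_end_le[OF _ L_pos weight_dvd[OF assms(1)]]
    by (simp_all add: w_def div_times_less_eq_dividend)
qed

lemma pack_less:
  assumes "p < Suc s * M"
  shows "pack p < B"
proof -
  consider "head p" | "closing p" | "filler p"
    unfolding filler_def by blast
  then show ?thesis
  proof cases
    case 1
    then show ?thesis by (auto simp: pack_def head_def)
  next
    case 2
    have "p mod M < M" using assms by (cases "M = 0") auto
    then show ?thesis using 2 by (auto simp: pack_def closing_def head_def)
  next
    case 3
    have "0 < w p" by (simp add: w_def)
    then have "offset p < B * L"
      using filler_end_le_line[OF assms 3] by linarith
    then show ?thesis using 3
      by (simp add: pack_def filler_def less_mult_imp_div_less)
  qed
qed

lemma head_load:
  assumes "b < B"
  shows "(\<Sum>q\<in>{q. q < Suc s * M \<and> head q \<and> pack q = b}. w q) \<le> a - 1"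
proof -
  define cells where "cells = {..<s} \<times> {6 * b..<6 * b + 6}"
  define index where "index = (\<lambda>(c, r). c * M + r)"
  have "{q. q < Suc s * M \<and> head q \<and> pack q = b} \<subseteq> index ` cells"
  proof
    fix q assume q: "q \<in> {q. q < Suc s * M \<and> head q \<and> pack q = b}"
    then have "(q div M, q mod M) \<in> cells"
      by (auto simp: cells_def head_def pack_def)
    moreover have "q = index (q div M, q mod M)"
      by (simp add: index_def)
    ultimately show "q \<in> index ` cells" by blast
  qed
  then have "(\<Sum>q\<in>{q. q < Suc s * M \<and> head q \<and> pack q = b}. w q) \<le> (\<Sum>q\<in>index ` cells. w q)"
    by (intro sum_mono2) (simp_all add: cells_def)
  also have "\<dots> \<le> (\<Sum>x\<in>cells. w (index x))"
    using sum_image_le[of cells w index] by (simp add: cells_def comp_def)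
  also have "\<dots> = (\<Sum>(c, r)\<in>cells. 7 ^ c)"
  proof (intro sum.cong refl)
    fix x assume "x \<in> cells"
    then obtain c r where x: "x = (c, r)" "r < 6 * b + 6" by (auto simp: cells_def)
    then have "r < M" using \<open>b < B\<close> M_eq by linarith
    then show "w (index x) = (case x of (c, r) \<Rightarrow> 7 ^ c)" using x by (simp add: index_def w_def)
  qed
  also have "\<dots> = (\<Sum>c<s. \<Sum>r\<in>{6 * b..<6 * b + 6}. 7 ^ c)"
    by (simp only: cells_def sum.cartesian_product)
  also have "\<dots> = a - 1"
    using six_times_sum_powers_seven[of s] by (simp add: a_def sum_distrib_left)
  finally show ?thesis .
qed

lemma filler_load: "(\<Sum>q\<in>{q. q < Suc s * M \<and> filler q \<and> pack q = b}. w q) \<le> L"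
proof -
  define F where "F = {q. q < Suc s * M \<and> filler q \<and> pack q = b}"
  define span where "span q = {offset q..<offset q + w q}" for q
  have "span p \<inter> span q = {}" if "p \<in> F" "q \<in> F" "p \<noteq> q" for p q
  proof (cases "p < q")
    case True
    then show ?thesis using that filler_offsets_mono[of p q] by (auto simp: F_def span_def)
  next
    case False
    then show ?thesis using that filler_offsets_mono[of q p] by (auto simp: F_def span_def)
  qed
  then have "(\<Sum>q\<in>F. w q) = card (\<Union>q\<in>F. span q)"
    by (subst card_UN_disjoint) (auto simp: F_def span_def)
  also have "\<dots> \<le> card {b * L..<b * L + L}"
    using filler_in_segment by (intro card_mono) (fastforce simp: F_def span_def)+
  finally show ?thesis by (simp add: F_def)
qed

lemma closing_not_before:
  assumes "i < j" "j < Suc s * M" "closing i"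
  shows "pack i \<noteq> pack j"
proof -
  have "i div M \<le> j div M" using \<open>i < j\<close> by (simp add: div_le_mono)
  then have same: "i div M = j div M" "j div M = s"
    using assms batch_le[of i] batch_le[of j] by (auto simp: closing_def)
  then have "i mod M < j mod M"
    using \<open>i < j\<close> by (metis add_less_cancel_left div_mult_mod_eq)
  then show ?thesis
    using assms same by (auto simp: pack_def closing_def head_def)
qed

lemma packing_load:
  assumes "j < Suc s * M"
  shows "(\<Sum>i\<in>{i. i < j \<and> pack i = pack j}. w i) < a * n"
proof -
  define H where "H = {q. q < Suc s * M \<and> head q \<and> pack q = pack j}"
  define F where "F = {q. q < Suc s * M \<and> filler q \<and> pack q = pack j}"
  have "{i. i < j \<and> pack i = pack j} \<subseteq> H \<union> F"
    using assms closing_not_before by (auto simp: H_def F_def filler_def)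
  then have "(\<Sum>i\<in>{i. i < j \<and> pack i = pack j}. w i) \<le> (\<Sum>i\<in>H \<union> F. w i)"
    by (intro sum_mono2) (simp_all add: H_def F_def)
  also have "\<dots> = (\<Sum>i\<in>H. w i) + (\<Sum>i\<in>F. w i)"
    by (intro sum.union_disjoint) (auto simp: H_def F_def filler_def)
  also have "\<dots> \<le> (a - 1) + L"
    using head_load[OF pack_less[OF assms]] filler_load unfolding H_def F_def by (rule add_mono)
  also have "\<dots> < a * n"
    using a_pos L_plus_a by linarith
  finally show ?thesis .
qed

lemma valid_packing: "valid_oe_packing items pack B"
proof (rule valid_oe_packing_scaled[OF _ items_scaled, THEN iffD2])
  show "0 < a * n" using a_pos six_le_n by simp
  show "(\<forall>i<length items. pack i < B) \<and>
      (\<forall>j<length items. (\<Sum>i\<in>{i. i < j \<and> pack i = pack j}. w i) < a * n)"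
    using pack_less packing_load by simp
qed

theorem OPT_items: "OPT items = B"
  using valid_packing bins_ge_B by (rule OPT_eqI)

end

lemma OPT_inverse_powers_seven:
  assumes "1 \<le> k" "k \<le> N"
  shows "OPT (concat (map (\<lambda>i. replicate (6 * t * (7 ^ N - 1 + 7 ^ (N - k))) (1 / (7::real) ^ i))
      (rev [k..<Suc N]))) = t * (7 * 7 ^ (N - k) - 1)"
proof -
  define s where "s = N - k"
  interpret geometric_batches s t "7 ^ k"
    using power_increasing[of 1 k "7::nat"] assms by unfold_locales simp
  have an: "a * 7 ^ k = 7 ^ N"
    unfolding a_def unfolding s_def using assms by (simp flip: power_add)
  have M_val: "M = 6 * t * (7 ^ N - 1 + 7 ^ (N - k))"
    unfolding M_def an unfolding a_def unfolding s_def ..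
  have B_val: "B = t * (7 * 7 ^ (N - k) - 1)"
    unfolding B_def a_def unfolding s_def ..
  have "Suc N - k = Suc s"
    using assms by (simp add: s_def)
  then have "concat (map (\<lambda>i. replicate M (1 / (7::real) ^ i)) (rev [k..<Suc N]))
      = map (\<lambda>p. 1 / 7 ^ (N - p div M)) [0..<Suc s * M]"
    unfolding rev_upt_Suc[OF le_SucI[OF \<open>k \<le> N\<close>]] map_map comp_def concat_map_replicate_upt
    by simp
  also have "\<dots> = items"
    unfolding items_def
  proof (intro map_cong refl)
    fix p assume "p \<in> set [0..<Suc s * M]"
    then have "p div M \<le> N" using batch_le[of p] by (simp add: s_def)
    then have "(7::real) ^ N = 7 ^ (N - p div M) * 7 ^ (p div M)"
      by (simp flip: power_add)
    then show "1 / 7 ^ (N - p div M) = real (w p) / real (a * 7 ^ k)"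
      unfolding an by (simp add: w_def field_simps)
  qed
  finally show ?thesis
    unfolding M_val[symmetric] B_val[symmetric] using OPT_items by simp
qed

lemma real_OPT_inverse_powers_seven:
  assumes "1 \<le> k" "k \<le> N" and M: "M = 6 * t * (7 ^ N - 1 + 7 ^ (N - k))"
  shows "real (OPT (concat (map (\<lambda>i. replicate M (1 / (7::real) ^ i)) (rev [k..<Suc N]))))
    = real M * (\<Sum>i = k..N. 1 / 7 ^ i) / (1 - 1 / 7 ^ N + 1 / 7 ^ k)"
proof -
  define a :: nat where "a = 7 ^ (N - k)"
  have a_ge_1: "1 \<le> a" and pow_ge_1: "(1::real) \<le> 7 ^ N"
    by (simp_all add: a_def)
  have opt: "real (OPT (concat (map (\<lambda>i. replicate M (1 / (7::real) ^ i)) (rev [k..<Suc N]))))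
      = real t * (7 * real a - 1)"
    unfolding M using OPT_inverse_powers_seven[OF assms(1,2)] a_ge_1 by (simp add: a_def of_nat_diff)
  have \<Theta>: "(\<Sum>i = k..N. 1 / (7::real) ^ i) = (7 * real a - 1) / (6 * 7 ^ N)"
    using sum_inverse_powers_seven[of k "N - k"] assms by (simp add: a_def)
  have denominator: "1 - 1 / 7 ^ N + 1 / 7 ^ k = (7 ^ N - 1 + real a) / (7::real) ^ N"
    using assms by (simp add: a_def field_simps flip: power_add)
  have "real (7 ^ N - 1 + a) = (7::real) ^ N - 1 + real a"
    using one_le_power[of "7::nat" N]
    by (simp only: of_nat_add of_nat_diff of_nat_power of_nat_numeral of_nat_1)
  then have real_M: "real M = 6 * real t * (7 ^ N - 1 + real a)"
    unfolding M a_def[symmetric] by simp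
  have ratio: "m * (c / (6 * x)) / (d / x) = t * c" if "0 < x" "0 < d" "m = 6 * t * d"
    for m c x d t :: real
    using that by (simp add: field_simps)
  have "0 < (7::real) ^ N - 1 + real a"
    using a_ge_1 pow_ge_1 by linarith
  then have "real M * ((7 * real a - 1) / (6 * 7 ^ N)) / ((7 ^ N - 1 + real a) / 7 ^ N)
      = real t * (7 * real a - 1)"
    by (intro ratio real_M) simp_all
  then show ?thesis
    by (simp only: opt \<Theta> denominator)
qed

lemma batch_size_dvd_fact:
  fixes k N :: nat
  assumes "1 \<le> k" "k \<le> N"
  shows "6 * (7 ^ N - 1 + 7 ^ (N - k)) dvd (fact (7 ^ (N + 1)) :: nat)"
proof (rule dvd_fact)
  have "1 \<le> (7::nat) ^ (N - k)" by simp
  then have "1 \<le> 7 ^ N - 1 + (7::nat) ^ (N - k)" by linarith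
  then show "1 \<le> 6 * (7 ^ N - 1 + (7::nat) ^ (N - k))" by (rule order_trans) simp
  have "Suc (N - k) \<le> N" using assms by arith
  then have "7 * 7 ^ (N - k) \<le> (7::nat) ^ N"
    by (simp flip: power_Suc)
  moreover have "6 * (7 ^ N - 1 + 7 ^ (N - k)) \<le> 6 * 7 ^ N + 6 * (7::nat) ^ (N - k)"
    by simp
  ultimately show "6 * (7 ^ N - 1 + 7 ^ (N - k)) \<le> (7::nat) ^ (N + 1)"
    by simp
qed

theorem mainTheorem9:
  fixes M N :: nat
  assumes "M \<ge> 3" and "N \<ge> 3" and "fact (7 ^ (N + 1)) dvd M"
  shows "\<forall>k. 1 \<le> k \<and> k \<le> N \<longrightarrow>
    (let \<theta> = (\<lambda>i::nat. 1 / (7::real) ^ i);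
         \<mu> = 1 / (7::real) ^ N;
         \<Theta> = (\<Sum>i = k..N. \<theta> i);
         I = concat (map (\<lambda>i. replicate M (\<theta> i)) (rev [k..<Suc N]))
     in real (OPT I) = real M * \<Theta> / (1 - \<mu> + \<theta> k))"
proof (intro allI impI)
  fix k assume k: "1 \<le> k \<and> k \<le> N"
  then have "6 * (7 ^ N - 1 + 7 ^ (N - k)) dvd M"
    using batch_size_dvd_fact assms(3) dvd_trans by blast
  then obtain t where "M = 6 * (7 ^ N - 1 + 7 ^ (N - k)) * t" ..
  then show "let \<theta> = (\<lambda>i::nat. 1 / (7::real) ^ i); \<mu> = 1 / (7::real) ^ N;
      \<Theta> = (\<Sum>i = k..N. \<theta> i); I = concat (map (\<lambda>i. replicate M (\<theta> i)) (rev [k..<Suc N]))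
    in real (OPT I) = real M * \<Theta> / (1 - \<mu> + \<theta> k)"
    unfolding Let_def using k by (intro real_OPT_inverse_powers_seven) (auto simp: mult_ac)
qed

end
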